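(* Let $U=(U_{ij})_{i,j=1}^M$, $U_{ij}\in M_M(\mathbb C)$, and $V=(V_{ab})_{a,b=1}^N$, $V_{ab}\in M_N(\mathbb C)$, be projective models and $Q\in M_{M\times N}(\mathbb T)$. Then the matrix $W^\circ=U\,{}_Q\!\otimes V$ given by $$(W^\circ_{ia,jb})_{kc,ld}=\frac{Q_{ka}Q_{lb}}{Q_{kb}Q_{la}}(U_{ij})_{kl}(V_{ab})_{cd}$$ is a projective model. Moreover, with $W=U\otimes_QV$, we have $W'=U'\,{}_Q\!\otimes V'$ and $(W^\circ)'=U'\otimes_QV'$.
   Context: A square matrix with entries in a $C^*$-algebra is magic if its entries are orthogonal projections and each row and column sums to $1$. For $U=(U_{ij})_{i,j=1}^n$, $U_{ij}\in M_n(\mathbb C)$, $U'$ is defined by $(U'_{kl})_{ij}=(U_{ij})_{kl}$; $U$ is a projective model if $U$ and $U'$ are magic. The deformed tensor product $U\otimes_QV$ is defined by $((U\otimes_QV)_{ia,jb})_{kc,ld}=\frac{Q_{ic}Q_{jd}}{Q_{id}Q_{jc}}(U_{ij})_{kl}(V_{ab})_{cd}$, and $U\,{}_Q\!\otimes V$ by the formula for $W^\circ$ in the statement ($i,j,k,l\in\{1,\dots,M\}$, $a,b,c,d\in\{1,\dots,N\}$). *)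

theory Defs
  imports Complex_Main
begin

text \<open>A square matrix indexed by a finite set I, whose entries are matrices
  indexed by the same set I, is encoded as a function U with
  U i j k l = (U_ij)_kl. All indices range over I.\<close>

definition orth_proj :: "'a set \<Rightarrow> ('a \<Rightarrow> 'a \<Rightarrow> complex) \<Rightarrow> bool" where
  "orth_proj I P \<longleftrightarrow>
     (\<forall>k\<in>I. \<forall>l\<in>I. P l k = cnj (P k l)) \<and>
     (\<forall>k\<in>I. \<forall>l\<in>I. (\<Sum>m\<in>I. P k m * P m l) = P k l)"

definition magic :: "'a set \<Rightarrow> ('a \<Rightarrow> 'a \<Rightarrow> 'a \<Rightarrow> 'a \<Rightarrow> complex) \<Rightarrow> bool" where
  "magic I U \<longleftrightarrow>
     (\<forall>i\<in>I. \<forall>j\<in>I. orth_proj I (U i j)) \<and>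
     (\<forall>i\<in>I. \<forall>k\<in>I. \<forall>l\<in>I. (\<Sum>j\<in>I. U i j k l) = (if k = l then 1 else 0)) \<and>
     (\<forall>j\<in>I. \<forall>k\<in>I. \<forall>l\<in>I. (\<Sum>i\<in>I. U i j k l) = (if k = l then 1 else 0))"

definition prime_model :: "('a \<Rightarrow> 'a \<Rightarrow> 'a \<Rightarrow> 'a \<Rightarrow> complex) \<Rightarrow> ('a \<Rightarrow> 'a \<Rightarrow> 'a \<Rightarrow> 'a \<Rightarrow> complex)" where
  "prime_model U = (\<lambda>i j k l. U k l i j)"

definition projective_model :: "'a set \<Rightarrow> ('a \<Rightarrow> 'a \<Rightarrow> 'a \<Rightarrow> 'a \<Rightarrow> complex) \<Rightarrow> bool" where
  "projective_model I U \<longleftrightarrow> magic I U \<and> magic I (prime_model U)"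

definition tensor_Q ::
  "(nat \<Rightarrow> nat \<Rightarrow> complex) \<Rightarrow> (nat \<Rightarrow> nat \<Rightarrow> nat \<Rightarrow> nat \<Rightarrow> complex) \<Rightarrow> (nat \<Rightarrow> nat \<Rightarrow> nat \<Rightarrow> nat \<Rightarrow> complex)
   \<Rightarrow> (nat \<times> nat \<Rightarrow> nat \<times> nat \<Rightarrow> nat \<times> nat \<Rightarrow> nat \<times> nat \<Rightarrow> complex)" where
  "tensor_Q Q U V = (\<lambda>(i,a) (j,b) (k,c) (l,d).
      Q i c * Q j d / (Q i d * Q j c) * U i j k l * V a b c d)"

definition Q_tensor ::
  "(nat \<Rightarrow> nat \<Rightarrow> complex) \<Rightarrow> (nat \<Rightarrow> nat \<Rightarrow> nat \<Rightarrow> nat \<Rightarrow> complex) \<Rightarrow> (nat \<Rightarrow> nat \<Rightarrow> nat \<Rightarrow> nat \<Rightarrow> complex)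
   \<Rightarrow> (nat \<times> nat \<Rightarrow> nat \<times> nat \<Rightarrow> nat \<times> nat \<Rightarrow> nat \<times> nat \<Rightarrow> complex)" where
  "Q_tensor Q U V = (\<lambda>(i,a) (j,b) (k,c) (l,d).
      Q k a * Q l b / (Q k b * Q l a) * U i j k l * V a b c d)"

end

theory Submission
  imports Defs
begin

text \<open>Each block of U \<otimes>_Q V is the tensor product of the projections U_ij and V_ab conjugated
  by the diagonal unitary with entries Q_ic / Q_jc, hence again a projection; in a row or column
  sum the phase is trivial exactly where the sum over one factor is nonzero, so the sums are
  still 1 or 0. The other deformation U _Q\<otimes> V is the first one with the factors swapped and
  Q transposed, and priming exchanges the two deformations, so both W\<degree> and
  (W\<degree>)' = U' \<otimes>_Q V' are magic.\<close>

lemma unimodular_mult_cnj [simp]: "cmod z = 1 \<Longrightarrow> z * cnj z = 1"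
  using complex_norm_square[of z] by simp

lemma unimodular_cnj_mult [simp]: "cmod z = 1 \<Longrightarrow> cnj z * z = 1"
  by (simp add: mult.commute)

lemma unimodular_cnj_eq_inverse: "cmod z = 1 \<Longrightarrow> cnj z = inverse z"
  using inverse_unique[OF unimodular_mult_cnj] by simp

lemma orth_proj_adjoint: "orth_proj I P \<Longrightarrow> k \<in> I \<Longrightarrow> l \<in> I \<Longrightarrow> P l k = cnj (P k l)"
  unfolding orth_proj_def by blast

lemma orth_proj_idem:
  "orth_proj I P \<Longrightarrow> k \<in> I \<Longrightarrow> l \<in> I \<Longrightarrow> (\<Sum>m\<in>I. P k m * P m l) = P k l"
  unfolding orth_proj_def by blast

lemma orth_proj_tensor:
  assumes P: "orth_proj I P" and R: "orth_proj J R"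
  shows "orth_proj (I \<times> J) (\<lambda>(k, c) (l, d). P k l * R c d)"
  unfolding orth_proj_def
proof (intro conjI ballI)
  fix x y assume "x \<in> I \<times> J" "y \<in> I \<times> J"
  then obtain k c l d where xy: "x = (k, c)" "y = (l, d)"
    and kl: "k \<in> I" "l \<in> I" "c \<in> J" "d \<in> J"
    by auto
  show "(\<lambda>(k, c) (l, d). P k l * R c d) y x = cnj ((\<lambda>(k, c) (l, d). P k l * R c d) x y)"
    using orth_proj_adjoint[OF P kl(1,2)] orth_proj_adjoint[OF R kl(3,4)] unfolding xy by simp
  have "(\<Sum>z\<in>I \<times> J. (\<lambda>(k, c) (l, d). P k l * R c d) x z * (\<lambda>(k, c) (l, d). P k l * R c d) z y)
      = (\<Sum>m\<in>I. \<Sum>e\<in>J. (P k m * P m l) * (R c e * R e d))"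
    unfolding xy sum.cartesian_product by (simp add: case_prod_beta mult_ac)
  also have "\<dots> = (\<Sum>m\<in>I. P k m * P m l) * (\<Sum>e\<in>J. R c e * R e d)"
    by (simp add: sum_product)
  also have "\<dots> = (\<lambda>(k, c) (l, d). P k l * R c d) x y"
    using orth_proj_idem[OF P kl(1,2)] orth_proj_idem[OF R kl(3,4)] unfolding xy by simp
  finally show "(\<Sum>z\<in>I \<times> J. (\<lambda>(k, c) (l, d). P k l * R c d) x z * (\<lambda>(k, c) (l, d). P k l * R c d) z y)
      = (\<lambda>(k, c) (l, d). P k l * R c d) x y" .
qed

lemma orth_proj_diagonal_conj:
  assumes P: "orth_proj I P" and f: "\<forall>x\<in>I. cmod (f x) = 1"
    and P': "\<forall>x\<in>I. \<forall>y\<in>I. P' x y = f x * cnj (f y) * P x y"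
  shows "orth_proj I P'"
  unfolding orth_proj_def
proof (intro conjI ballI)
  fix x y assume xy: "x \<in> I" "y \<in> I"
  show "P' y x = cnj (P' x y)"
    using P' xy orth_proj_adjoint[OF P xy] by (simp add: mult_ac)
  have "(\<Sum>m\<in>I. P' x m * P' m y) = (\<Sum>m\<in>I. f x * cnj (f y) * (P x m * P m y))"
  proof (rule sum.cong[OF refl])
    fix m assume m: "m \<in> I"
    have "P' x m * P' m y = f x * cnj (f y) * (cnj (f m) * f m) * (P x m * P m y)"
      using P' xy m by (simp add: mult_ac)
    then show "P' x m * P' m y = f x * cnj (f y) * (P x m * P m y)"
      using f m by simp
  qed
  also have "\<dots> = P' x y"
    using P' xy orth_proj_idem[OF P xy] by (simp add: sum_distrib_left[symmetric])
  finally show "(\<Sum>m\<in>I. P' x m * P' m y) = P' x y" .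
qed

lemma orth_proj_reindex:
  assumes P: "orth_proj I P" and h: "bij_betw h I' I"
  shows "orth_proj I' (\<lambda>x y. P (h x) (h y))"
  unfolding orth_proj_def
proof (intro conjI ballI)
  fix x y assume "x \<in> I'" "y \<in> I'"
  then have hxy: "h x \<in> I" "h y \<in> I"
    using h by (blast intro: bij_betw_apply)+
  show "P (h y) (h x) = cnj (P (h x) (h y))"
    using P hxy by (rule orth_proj_adjoint)
  have "(\<Sum>m\<in>I'. P (h x) (h m) * P (h m) (h y)) = (\<Sum>m\<in>I. P (h x) m * P m (h y))"
    using h by (rule sum.reindex_bij_betw)
  also have "\<dots> = P (h x) (h y)"
    using P hxy by (rule orth_proj_idem)
  finally show "(\<Sum>m\<in>I'. P (h x) (h m) * P (h m) (h y)) = P (h x) (h y)" .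
qed

lemma magic_orth_proj: "magic I U \<Longrightarrow> i \<in> I \<Longrightarrow> j \<in> I \<Longrightarrow> orth_proj I (U i j)"
  unfolding magic_def by blast

lemma magic_row_sum:
  "magic I U \<Longrightarrow> i \<in> I \<Longrightarrow> k \<in> I \<Longrightarrow> l \<in> I
    \<Longrightarrow> (\<Sum>j\<in>I. U i j k l) = (if k = l then 1 else 0)"
  unfolding magic_def by blast

lemma magic_col_sum:
  "magic I U \<Longrightarrow> j \<in> I \<Longrightarrow> k \<in> I \<Longrightarrow> l \<in> I
    \<Longrightarrow> (\<Sum>i\<in>I. U i j k l) = (if k = l then 1 else 0)"
  unfolding magic_def by blast

lemma magic_reindex:
  assumes W: "magic I W" and h: "bij_betw h I' I"
  shows "magic I' (\<lambda>x y u v. W (h x) (h y) (h u) (h v))"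
  unfolding magic_def
proof (intro conjI ballI)
  have hI: "h x \<in> I" if "x \<in> I'" for x
    using h that by (rule bij_betw_apply)
  have h_eq_iff: "(h u = h v) = (u = v)" if "u \<in> I'" "v \<in> I'" for u v
    using h that by (metis bij_betw_imp_inj_on inj_onD)
  {
    fix x y assume "x \<in> I'" "y \<in> I'"
    then have "orth_proj I (W (h x) (h y))"
      using W hI by (blast intro: magic_orth_proj)
    then show "orth_proj I' (\<lambda>u v. W (h x) (h y) (h u) (h v))"
      using h by (rule orth_proj_reindex)
  }
  fix x u v assume xuv: "x \<in> I'" "u \<in> I'" "v \<in> I'"
  have "(\<Sum>y\<in>I'. W (h x) (h y) (h u) (h v)) = (\<Sum>y\<in>I. W (h x) y (h u) (h v))"
    using h by (rule sum.reindex_bij_betw)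
  also have "\<dots> = (if h u = h v then 1 else 0)"
    using W hI xuv by (blast intro: magic_row_sum)
  finally show "(\<Sum>y\<in>I'. W (h x) (h y) (h u) (h v)) = (if u = v then 1 else 0)"
    using h_eq_iff xuv by simp
  have "(\<Sum>y\<in>I'. W (h y) (h x) (h u) (h v)) = (\<Sum>y\<in>I. W y (h x) (h u) (h v))"
    using h by (rule sum.reindex_bij_betw)
  also have "\<dots> = (if h u = h v then 1 else 0)"
    using W hI xuv by (blast intro: magic_col_sum)
  finally show "(\<Sum>y\<in>I'. W (h y) (h x) (h u) (h v)) = (if u = v then 1 else 0)"
    using h_eq_iff xuv by simp
qed

lemma sum_phase_tensor_delta:
  fixes p u :: "'i \<Rightarrow> 'a::semiring_1" and v :: "'j \<Rightarrow> 'a"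
  assumes v: "(\<Sum>b\<in>J. v b) = (if P then 1 else 0)"
    and p: "P \<Longrightarrow> \<forall>j\<in>I. p j = 1"
  shows "(\<Sum>(j, b)\<in>I \<times> J. p j * u j * v b) = (if P then \<Sum>j\<in>I. u j else 0)"
proof -
  have "(\<Sum>(j, b)\<in>I \<times> J. p j * u j * v b) = (\<Sum>j\<in>I. p j * u j * (\<Sum>b\<in>J. v b))"
    by (simp add: sum.cartesian_product[symmetric] sum_distrib_left)
  also have "\<dots> = (if P then \<Sum>j\<in>I. u j else 0)"
    using v p by (auto intro: sum.cong)
  finally show ?thesis .
qed

lemma orth_proj_tensor_Q_entry:
  assumes U: "magic I U" and V: "magic J V"
    and Q: "\<forall>k\<in>I. \<forall>a\<in>J. cmod (Q k a) = 1"
    and ij: "i \<in> I" "j \<in> I" "a \<in> J" "b \<in> J"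
  shows "orth_proj (I \<times> J) (tensor_Q Q U V (i, a) (j, b))"
proof (rule orth_proj_diagonal_conj)
  show "orth_proj (I \<times> J) (\<lambda>(k, c) (l, d). U i j k l * V a b c d)"
    using U V ij by (blast intro: orth_proj_tensor magic_orth_proj)
  show "\<forall>u\<in>I \<times> J. cmod ((\<lambda>(k, c). Q i c / Q j c) u) = 1"
    using Q ij by (auto simp: norm_divide)
  show "\<forall>u\<in>I \<times> J. \<forall>w\<in>I \<times> J. tensor_Q Q U V (i, a) (j, b) u w
      = (\<lambda>(k, c). Q i c / Q j c) u * cnj ((\<lambda>(k, c). Q i c / Q j c) w)
        * (\<lambda>(k, c) (l, d). U i j k l * V a b c d) u w"
  proof (clarify)
    fix k c l d assume "k \<in> I" "c \<in> J" "l \<in> I" "d \<in> J"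
    then have "cnj (Q i d) = inverse (Q i d)" "cnj (Q j d) = inverse (Q j d)"
      using Q ij by (simp_all add: unimodular_cnj_eq_inverse)
    then show "tensor_Q Q U V (i, a) (j, b) (k, c) (l, d)
        = Q i c / Q j c * cnj (Q i d / Q j d) * (U i j k l * V a b c d)"
      by (simp add: tensor_Q_def field_simps)
  qed
qed

lemma tensor_Q_row_sum:
  assumes U: "magic I U" and V: "magic J V"
    and Q: "\<forall>k\<in>I. \<forall>a\<in>J. cmod (Q k a) = 1"
    and ikl: "i \<in> I" "k \<in> I" "l \<in> I" and acd: "a \<in> J" "c \<in> J" "d \<in> J"
  shows "(\<Sum>w\<in>I \<times> J. tensor_Q Q U V (i, a) w (k, c) (l, d)) = (if (k, c) = (l, d) then 1 else 0)"
proof -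
  have "(\<Sum>w\<in>I \<times> J. tensor_Q Q U V (i, a) w (k, c) (l, d))
      = (\<Sum>(j, b)\<in>I \<times> J. Q i c * Q j d / (Q i d * Q j c) * U i j k l * V a b c d)"
    by (simp add: tensor_Q_def split_def)
  also have "\<dots> = (if c = d then \<Sum>j\<in>I. U i j k l else 0)"
    using ikl acd Q by (intro sum_phase_tensor_delta magic_row_sum[OF V]) force+
  finally show ?thesis
    using ikl magic_row_sum[OF U] by simp
qed

lemma tensor_Q_col_sum:
  assumes U: "magic I U" and V: "magic J V"
    and Q: "\<forall>k\<in>I. \<forall>a\<in>J. cmod (Q k a) = 1"
    and jkl: "j \<in> I" "k \<in> I" "l \<in> I" and bcd: "b \<in> J" "c \<in> J" "d \<in> J"
  shows "(\<Sum>w\<in>I \<times> J. tensor_Q Q U V w (j, b) (k, c) (l, d)) = (if (k, c) = (l, d) then 1 else 0)"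
proof -
  have "(\<Sum>w\<in>I \<times> J. tensor_Q Q U V w (j, b) (k, c) (l, d))
      = (\<Sum>(i, a)\<in>I \<times> J. Q i c * Q j d / (Q i d * Q j c) * U i j k l * V a b c d)"
    by (simp add: tensor_Q_def split_def)
  also have "\<dots> = (if c = d then \<Sum>i\<in>I. U i j k l else 0)"
    using jkl bcd Q by (intro sum_phase_tensor_delta magic_col_sum[OF V]) force+
  finally show ?thesis
    using jkl magic_col_sum[OF U] by simp
qed

lemma magic_tensor_Q:
  assumes U: "magic I U" and V: "magic J V"
    and Q: "\<forall>k\<in>I. \<forall>a\<in>J. cmod (Q k a) = 1"
  shows "magic (I \<times> J) (tensor_Q Q U V)"
  unfolding magic_def
proof (intro conjI ballI)
  fix x y assume "x \<in> I \<times> J" "y \<in> I \<times> J"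
  then show "orth_proj (I \<times> J) (tensor_Q Q U V x y)"
    using orth_proj_tensor_Q_entry[OF U V Q] by (cases x, cases y) simp
next
  fix x y z assume "x \<in> I \<times> J" "y \<in> I \<times> J" "z \<in> I \<times> J"
  then obtain i a k c l d where "x = (i, a)" "y = (k, c)" "z = (l, d)"
    and "i \<in> I" "a \<in> J" "k \<in> I" "c \<in> J" "l \<in> I" "d \<in> J"
    by blast
  then show "(\<Sum>w\<in>I \<times> J. tensor_Q Q U V x w y z) = (if y = z then 1 else 0)"
    and "(\<Sum>w\<in>I \<times> J. tensor_Q Q U V w x y z) = (if y = z then 1 else 0)"
    using tensor_Q_row_sum[OF U V Q, of i k l a c d] tensor_Q_col_sum[OF U V Q, of i k l a c d]
    by simp_all
qed

lemma Q_tensor_conv_tensor_Q: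
  "Q_tensor Q U V = (\<lambda>x y u v.
      tensor_Q (\<lambda>a k. Q k a) V U (prod.swap x) (prod.swap y) (prod.swap u) (prod.swap v))"
proof (intro ext, clarify)
  fix i a j b k c l d
  show "Q_tensor Q U V (i, a) (j, b) (k, c) (l, d)
      = tensor_Q (\<lambda>a k. Q k a) V U (prod.swap (i, a)) (prod.swap (j, b))
          (prod.swap (k, c)) (prod.swap (l, d))"
    by (simp add: Q_tensor_def tensor_Q_def mult.commute mult.left_commute)
qed

lemma magic_Q_tensor:
  assumes U: "magic I U" and V: "magic J V"
    and Q: "\<forall>k\<in>I. \<forall>a\<in>J. cmod (Q k a) = 1"
  shows "magic (I \<times> J) (Q_tensor Q U V)"
proof -
  have "magic (J \<times> I) (tensor_Q (\<lambda>a k. Q k a) V U)"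
    using V U Q by (intro magic_tensor_Q) auto
  moreover have "bij_betw prod.swap (I \<times> J) (J \<times> I)"
    by (simp add: bij_betw_def product_swap)
  ultimately show ?thesis
    unfolding Q_tensor_conv_tensor_Q by (rule magic_reindex)
qed

lemma prime_model_tensor_Q:
  "prime_model (tensor_Q Q U V) = Q_tensor Q (prime_model U) (prime_model V)"
  by (simp add: fun_eq_iff split_paired_all prime_model_def tensor_Q_def Q_tensor_def)

lemma prime_model_Q_tensor:
  "prime_model (Q_tensor Q U V) = tensor_Q Q (prime_model U) (prime_model V)"
  by (simp add: fun_eq_iff split_paired_all prime_model_def tensor_Q_def Q_tensor_def)

theorem proposition2p5:
  fixes M N :: nat
    and U V :: "nat \<Rightarrow> nat \<Rightarrow> nat \<Rightarrow> nat \<Rightarrow> complex"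
    and Q :: "nat \<Rightarrow> nat \<Rightarrow> complex"
  assumes "projective_model {0..<M} U"
    and "projective_model {0..<N} V"
    and "\<forall>k<M. \<forall>a<N. cmod (Q k a) = 1"
  shows "projective_model ({0..<M} \<times> {0..<N}) (Q_tensor Q U V)
    \<and> prime_model (tensor_Q Q U V) = Q_tensor Q (prime_model U) (prime_model V)
    \<and> prime_model (Q_tensor Q U V) = tensor_Q Q (prime_model U) (prime_model V)"
proof -
  have Q: "\<forall>k\<in>{0..<M}. \<forall>a\<in>{0..<N}. cmod (Q k a) = 1"
    using assms(3) by simp
  have "magic ({0..<M} \<times> {0..<N}) (Q_tensor Q U V)"
    using assms(1,2) Q unfolding projective_model_def by (intro magic_Q_tensor) auto
  moreover have "magic ({0..<M} \<times> {0..<N}) (prime_model (Q_tensor Q U V))"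
    unfolding prime_model_Q_tensor
    using assms(1,2) Q unfolding projective_model_def by (intro magic_tensor_Q) auto
  ultimately show ?thesis
    unfolding projective_model_def using prime_model_tensor_Q prime_model_Q_tensor by blast
qed

end
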